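(* Consider the ISQA framework described in the context for $\min_x F(x)=f(x)+\Psi(x)$, run with the stopping condition $\|r^t\|\le\epsilon_t$, and assume there are $M\ge m>0$ with $M I\succeq H_t\succeq mI$ for all $t$. Let $x^*$ satisfy $$0\in\operatorname{relint}\big(\partial F(x^* )\big)=\nabla f(x^* )+\operatorname{relint}\big(\partial\Psi(x^* )\big),$$ with $\Psi$ partly smooth at $x^*$ relative to some manifold $\mathcal{M}$, and assume $f$ is $L$-smooth (gradient $L$-Lipschitz) in a neighborhood of $x^*$ for some $L>0$. Then there exist $\epsilon,\delta>0$ such that, for any iteration $t$, if $\|x^t-x^*\|\le\delta$, $\epsilon_t\le\epsilon$ and $\alpha_t=1$, then $x^{t+1}\in\mathcal{M}$.
   Context: Standing setting: $\mathcal{H}$ is a Euclidean space; $f:\mathcal{H}\to\mathbb{R}$ is continuously differentiable with Lipschitz gradient; $\Psi:\mathcal{H}\to(-\infty,\infty]$ is convex, proper, lower semicontinuous; $F=f+\Psi$ has a nonempty solution set. $\partial F(x)=\nabla f(x)+\partial\Psi(x)$; $\operatorname{relint}$ is relative interior. ISQA framework: given $x^0\in\mathcal{H}$ and $\gamma,\beta\in(0,1)$, for $t=0,1,\dots$: choose a self-adjoint positive semidefinite linear operator $H_t$ on $\mathcal{H}$ and $\epsilon_t\ge0$; let $Q_t(p):=\langle\nabla f(x^t),p\rangle+\tfrac12\langle p,H_tp\rangle+\Psi(x^t+p)-\Psi(x^t)$; compute $p^t$ with $\|r^t\|\le\epsilon_t$, where $r^t$ is the minimum-norm element of $\partial_pQ_t(p^t)$;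 let $\alpha_t$ be the largest element of $\{1,\beta,\beta^2,\dots\}$ with $F(x^t+\alpha_tp^t)\le F(x^t)+\gamma\alpha_tQ_t(p^t)$; set $x^{t+1}=x^t+\alpha_tp^t$. Manifolds and partial smoothness: $\mathcal{M}$ is a $p$-dimensional $\mathcal{C}^k$ manifold around $x$ if near $x$ it is the zero set of a $\mathcal{C}^k$ map $\Phi:\mathcal{H}\to\mathbb{R}^{\dim\mathcal{H}-p}$ with surjective derivative at $x$. $\Psi$ is partly smooth at $x^*$ relative to $\mathcal{M}\ni x^*$ if $\partial\Psi(x^* )\ne\emptyset$ and (i) near $x^*$, $\mathcal{M}$ is a $\mathcal{C}^2$ manifold and $\Psi|_{\mathcal{M}}$ is $\mathcal{C}^2$; (ii) the affine span of $\partial\Psi(x^* )$ is a translate of the normal space to $\mathcal{M}$ at $x^*$; (iii) $\partial\Psi$ is continuous at $x^*$ relative to $\mathcal{M}$; (iv) $\Psi$ is regular at points of $\mathcal{M}$ near $x^*$ with nonempty subdifferential. *)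

theory Defs
  imports "HOL-Analysis.Analysis"
begin

definition proper_fun :: "('a \<Rightarrow> ereal) \<Rightarrow> bool" where
  "proper_fun \<Psi> \<longleftrightarrow> (\<forall>x. \<Psi> x \<noteq> -\<infinity>) \<and> (\<exists>x. \<Psi> x < \<infinity>)"

definition convex_ext :: "('a::real_vector \<Rightarrow> ereal) \<Rightarrow> bool" where
  "convex_ext \<Psi> \<longleftrightarrow> (\<forall>x y u. 0 \<le> u \<and> u \<le> 1 \<longrightarrow>
      \<Psi> (u *\<^sub>R x + (1 - u) *\<^sub>R y) \<le> ereal u * \<Psi> x + ereal (1 - u) * \<Psi> y)"

definition lsc_ext :: "('a::topological_space \<Rightarrow> ereal) \<Rightarrow> bool" where
  "lsc_ext \<Psi> \<longleftrightarrow> (\<forall>x X. X \<longlonglongrightarrow> x \<longrightarrow> \<Psi> x \<le> liminf (\<lambda>n. \<Psi> (X n)))"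

text \<open>Convex subdifferential (empty outside the effective domain).\<close>
definition subdiff :: "('a::real_inner \<Rightarrow> ereal) \<Rightarrow> 'a \<Rightarrow> 'a set" where
  "subdiff \<Psi> x = {g. \<bar>\<Psi> x\<bar> < \<infinity> \<and> (\<forall>y. \<Psi> y \<ge> \<Psi> x + ereal (g \<bullet> (y - x)))}"

definition min_norm_elem :: "'a::real_normed_vector \<Rightarrow> 'a set \<Rightarrow> bool" where
  "min_norm_elem r S \<longleftrightarrow> r \<in> S \<and> (\<forall>g\<in>S. norm r \<le> norm g)"

definition C2_on :: "'a set \<Rightarrow> ('a::euclidean_space \<Rightarrow> real) \<Rightarrow> bool" where
  "C2_on U g \<longleftrightarrow> (\<exists>G :: 'a \<Rightarrow> 'a. \<exists>G2 :: 'a \<Rightarrow> ('a \<Rightarrow>\<^sub>L 'a).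
      (\<forall>y\<in>U. (g has_derivative (\<lambda>h. G y \<bullet> h)) (at y)) \<and>
      (\<forall>y\<in>U. (G has_derivative blinfun_apply (G2 y)) (at y)) \<and>
      continuous_on U G2)"

text \<open>Local chart of a C^2 manifold of dimension DIM('a) - d around x:
  near x (on the open neighbourhood U), M is the zero set of
  \<Phi> = (\<Phi> 0, ..., \<Phi> (d-1)) : H \<rightarrow> R^d, each component C^2, with surjective
  derivative at x.\<close>
definition C2_manifold_chart ::
  "'a::euclidean_space set \<Rightarrow> 'a \<Rightarrow> 'a set \<Rightarrow> nat \<Rightarrow> (nat \<Rightarrow> 'a \<Rightarrow> real) \<Rightarrow> bool" where
  "C2_manifold_chart M x U d \<Phi> \<longleftrightarrow>
     open U \<and> x \<in> U \<and> d \<le> DIM('a) \<and>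
     (\<forall>i<d. C2_on U (\<Phi> i)) \<and>
     M \<inter> U = {y\<in>U. \<forall>i<d. \<Phi> i y = 0} \<and>
     (\<forall>v :: nat \<Rightarrow> real. \<exists>h. \<forall>i<d. frechet_derivative (\<Phi> i) (at x) h = v i)"

text \<open>Tangent space of M at x computed from a chart: the kernel of the derivative of \<Phi>;
  the normal space is its orthogonal complement.\<close>
definition chart_normal_space :: "'a::euclidean_space \<Rightarrow> nat \<Rightarrow> (nat \<Rightarrow> 'a \<Rightarrow> real) \<Rightarrow> 'a set" where
  "chart_normal_space x d \<Phi> =
     {v. \<forall>h. (\<forall>i<d. frechet_derivative (\<Phi> i) (at x) h = 0) \<longrightarrow> v \<bullet> h = 0}"

text \<open>Continuity of the set-valued map \<partial>\<Psi> at x relative to M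
  (Painleve-Kuratowski: outer and inner semicontinuity along M).\<close>
definition subdiff_continuous_rel :: "('a::euclidean_space \<Rightarrow> ereal) \<Rightarrow> 'a \<Rightarrow> 'a set \<Rightarrow> bool" where
  "subdiff_continuous_rel \<Psi> x M \<longleftrightarrow>
     (\<forall>y v w. (\<forall>k. y k \<in> M \<and> v k \<in> subdiff \<Psi> (y k)) \<and> y \<longlonglongrightarrow> x \<and> v \<longlonglongrightarrow> w
         \<longrightarrow> w \<in> subdiff \<Psi> x) \<and>
     (\<forall>y. (\<forall>k. y k \<in> M) \<and> y \<longlonglongrightarrow> x \<longrightarrow>
         (\<forall>w\<in>subdiff \<Psi> x. \<exists>v. v \<longlonglongrightarrow> w \<and> (\<forall>\<^sub>F k in sequentially. v k \<in> subdiff \<Psi> (y k))))"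

text \<open>Partial smoothness of \<Psi> at x relative to M (Lewis).  \<Psi>|M being C^2 near x is
  rendered as: \<Psi> is finite on M near x and agrees there with a C^2 function.
  Regularity in (iv) is automatic for convex proper lsc \<Psi> at points with nonempty
  subdifferential, so only nonemptiness is recorded.\<close>
definition partly_smooth :: "('a::euclidean_space \<Rightarrow> ereal) \<Rightarrow> 'a \<Rightarrow> 'a set \<Rightarrow> bool" where
  "partly_smooth \<Psi> x M \<longleftrightarrow> x \<in> M \<and> subdiff \<Psi> x \<noteq> {} \<and>
     (\<exists>U d \<Phi>. C2_manifold_chart M x U d \<Phi> \<and>
        (\<exists>g. C2_on U g \<and> (\<forall>y\<in>M \<inter> U. \<Psi> y = ereal (g y))) \<and>
        (\<exists>a. affine hull (subdiff \<Psi> x) = (\<lambda>v. a + v) ` chart_normal_space x d \<Phi>)) \<and>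
     subdiff_continuous_rel \<Psi> x M \<and>
     (\<exists>V. open V \<and> x \<in> V \<and> (\<forall>y\<in>M \<inter> V. subdiff \<Psi> y \<noteq> {}))"

definition isqa_Q :: "('a::real_inner \<Rightarrow> 'a) \<Rightarrow> ('a \<Rightarrow> ereal) \<Rightarrow> 'a \<Rightarrow> ('a \<Rightarrow> 'a) \<Rightarrow> 'a \<Rightarrow> ereal" where
  "isqa_Q gradf \<Psi> xt Ht p =
     ereal (gradf xt \<bullet> p + (1/2) * (p \<bullet> Ht p)) + \<Psi> (xt + p) - \<Psi> xt"

end

theory Submission
  imports Defs
begin

text \<open>
  With unit step the new iterate is \<open>x\<^sub>t + p\<^sub>t\<close>, and the residual \<open>r\<^sub>t \<in> \<partial>Q\<^sub>t(p\<^sub>t)\<close> yields the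
  subgradient \<open>r\<^sub>t - \<nabla>f(x\<^sub>t) - H\<^sub>t p\<^sub>t \<in> \<partial>\<Psi>(x\<^sub>t + p\<^sub>t)\<close>. Monotonicity of \<open>\<partial>\<Psi>\<close> and
  \<open>mI \<preceq> H\<^sub>t \<preceq> MI\<close> put this point and this subgradient within \<open>O(\<parallel>r\<^sub>t\<parallel> + \<parallel>x\<^sub>t - x\<^sup>*\<parallel>)\<close> of
  \<open>x\<^sup>*\<close> and \<open>-\<nabla>f(x\<^sup>*)\<close>, so it suffices to show that partial smoothness identifies \<open>\<M>\<close>:
  points near \<open>x\<^sup>*\<close> with a subgradient near \<open>v = -\<nabla>f(x\<^sup>*) \<in> relint \<partial>\<Psi>(x\<^sup>*)\<close> lie on \<open>\<M>\<close>.
  Otherwise there are \<open>y\<^sub>k \<notin> \<M>\<close> with such subgradients \<open>v\<^sub>k\<close>; a fixed-point argument in the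
  chart moves \<open>y\<^sub>k\<close> onto \<open>\<M>\<close> along the normal space, and the normalized corrections
  converge to a unit normal \<open>l\<close>. Monotonicity between \<open>y\<^sub>k\<close> and the corrected points, with
  inner semicontinuity of \<open>\<partial>\<Psi>\<close> along \<open>\<M>\<close>, gives \<open>\<langle>w - v, l\<rangle> \<ge> 0\<close> for all
  \<open>w \<in> \<partial>\<Psi>(x\<^sup>*)\<close>. Since the affine hull of \<open>\<partial>\<Psi>(x\<^sup>*)\<close> is parallel to the normal space,
  \<open>v - e l \<in> \<partial>\<Psi>(x\<^sup>*)\<close> for small \<open>e > 0\<close>, a contradiction.
\<close>

section \<open>Positive semidefinite operators\<close>

lemma quadratic_nonneg_imp_discriminant_le:
  fixes a b c :: real
  assumes nonneg: "\<And>t. 0 \<le> a + 2 * t * b + t\<^sup>2 * c" and "0 \<le> c"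
  shows "b\<^sup>2 \<le> a * c"
proof (cases "c = 0")
  case True
  have "b = 0"
  proof (rule ccontr)
    assume "b \<noteq> 0"
    have "0 \<le> a + 2 * (-(a + 1) / (2 * b)) * b" using nonneg[of "-(a + 1) / (2 * b)"] True by simp
    also have "\<dots> = -1" using \<open>b \<noteq> 0\<close> by (simp add: field_simps)
    finally show False by simp
  qed
  then show ?thesis using True nonneg[of 0] by simp
next
  case False
  with \<open>0 \<le> c\<close> have "0 < c" by simp
  have "0 \<le> a + 2 * (-b / c) * b + (-b / c)\<^sup>2 * c" by (rule nonneg)
  also have "\<dots> = (a * c - b\<^sup>2) / c" using False by (simp add: field_simps power2_eq_square)
  finally show ?thesis using \<open>0 < c\<close> by (simp add: zero_le_divide_iff)
qed

lemma psd_operator_Cauchy_Schwarz: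
  fixes A :: "'a::real_inner \<Rightarrow> 'a"
  assumes lin: "linear A" and sym: "\<And>u v. A u \<bullet> v = u \<bullet> A v" and psd: "\<And>v. 0 \<le> v \<bullet> A v"
  shows "(u \<bullet> A w)\<^sup>2 \<le> (u \<bullet> A u) * (w \<bullet> A w)"
proof (rule quadratic_nonneg_imp_discriminant_le)
  fix t :: real
  have "0 \<le> (u + t *\<^sub>R w) \<bullet> A (u + t *\<^sub>R w)" by (rule psd)
  also have "\<dots> = u \<bullet> A u + t * (u \<bullet> A w) + t * (w \<bullet> A u) + t\<^sup>2 * (w \<bullet> A w)"
    by (simp add: linear_add[OF lin] linear_scale[OF lin] inner_add_left inner_add_right
        power2_eq_square algebra_simps)
  also have "w \<bullet> A u = u \<bullet> A w" by (metis sym inner_commute)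
  finally show "0 \<le> u \<bullet> A u + 2 * t * (u \<bullet> A w) + t\<^sup>2 * (w \<bullet> A w)" by simp
qed (rule psd)

lemma psd_operator_norm_le:
  fixes A :: "'a::real_inner \<Rightarrow> 'a"
  assumes lin: "linear A" and sym: "\<And>u v. A u \<bullet> v = u \<bullet> A v" and psd: "\<And>v. 0 \<le> v \<bullet> A v"
    and upper: "\<And>v. v \<bullet> A v \<le> M * (v \<bullet> v)" and "0 \<le> M"
  shows "norm (A v) \<le> M * norm v"
proof (cases "A v = 0")
  case True
  then show ?thesis using \<open>0 \<le> M\<close> by simp
next
  case False
  have "(A v \<bullet> A v)\<^sup>2 \<le> (A v \<bullet> A (A v)) * (v \<bullet> A v)"
    using psd_operator_Cauchy_Schwarz[OF lin sym psd, of "A v" v] by simp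
  also have "\<dots> \<le> (M * (A v \<bullet> A v)) * (M * (v \<bullet> v))"
    by (intro mult_mono upper psd) (use \<open>0 \<le> M\<close> in auto)
  finally have "(norm (A v))\<^sup>2 * (norm (A v))\<^sup>2 \<le> (norm (A v))\<^sup>2 * (M * norm v)\<^sup>2"
    by (simp add: power2_norm_eq_inner[symmetric] power2_eq_square algebra_simps)
  moreover have "0 < (norm (A v))\<^sup>2" using False by simp
  ultimately have "(norm (A v))\<^sup>2 \<le> (M * norm v)\<^sup>2"
    by (metis mult_le_cancel_left_pos)
  then show ?thesis using \<open>0 \<le> M\<close> by (simp add: power2_le_iff_abs_le)
qed

section \<open>Subgradients of the ISQA model\<close>

lemma le_of_forall_small_pos:
  fixes a b c :: real
  assumes "\<And>s. 0 < s \<Longrightarrow> s \<le> 1 \<Longrightarrow> a \<le> b + s * c"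
  shows "a \<le> b"
proof (rule tendsto_lowerbound)
  show "((\<lambda>s. b + s * c) \<longlongrightarrow> b) (at_right 0)"
    by (auto intro!: tendsto_eq_intros)
  show "\<forall>\<^sub>F s in at_right 0. a \<le> b + s * c"
  proof (rule eventually_mono)
    show "\<forall>\<^sub>F s in at_right 0. s \<in> {0<..<1::real}" by (rule eventually_at_right_real) simp
  qed (simp add: assms)
qed simp

lemma quadratic_form_expansion:
  fixes g :: "'a::real_inner" and Hh :: "'a \<Rightarrow> 'a"
  assumes lin: "linear Hh" and sym: "\<And>u v. Hh u \<bullet> v = u \<bullet> Hh v"
  shows "g \<bullet> (p + s *\<^sub>R d) + 1/2 * ((p + s *\<^sub>R d) \<bullet> Hh (p + s *\<^sub>R d))
       = g \<bullet> p + 1/2 * (p \<bullet> Hh p) + s * ((g + Hh p) \<bullet> d) + s\<^sup>2 / 2 * (d \<bullet> Hh d)"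
proof -
  have "d \<bullet> Hh p = Hh p \<bullet> d" "p \<bullet> Hh d = Hh p \<bullet> d" by (metis sym inner_commute)+
  then show ?thesis
    by (simp add: linear_add[OF lin] linear_scale[OF lin] inner_add_left inner_add_right
        power2_eq_square algebra_simps)
qed

lemma convex_ext_chord_le:
  assumes "convex_ext \<Psi>" and "\<Psi> a = ereal A" "\<Psi> b = ereal B" and "0 \<le> s" "s \<le> 1"
  shows "\<Psi> (a + s *\<^sub>R (b - a)) \<le> ereal (A + s * (B - A))"
proof -
  have "a + s *\<^sub>R (b - a) = s *\<^sub>R b + (1 - s) *\<^sub>R a" by (simp add: algebra_simps)
  then have "\<Psi> (a + s *\<^sub>R (b - a)) \<le> ereal s * \<Psi> b + ereal (1 - s) * \<Psi> a"
    using \<open>convex_ext \<Psi>\<close> \<open>0 \<le> s\<close> \<open>s \<le> 1\<close> unfolding convex_ext_def by presburger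
  then show ?thesis using assms(2,3) by (simp add: algebra_simps)
qed

lemma subdiff_isqa_Q_shift:
  fixes gradf :: "'a::real_inner \<Rightarrow> 'a" and \<Psi> :: "'a \<Rightarrow> ereal" and Hh :: "'a \<Rightarrow> 'a"
  assumes conv: "convex_ext \<Psi>" and no_minf: "\<And>y. \<Psi> y \<noteq> -\<infinity>"
    and lin: "linear Hh" and sym: "\<And>u v. Hh u \<bullet> v = u \<bullet> Hh v"
    and fin: "\<bar>\<Psi> xt\<bar> < \<infinity>"
    and r: "r \<in> subdiff (isqa_Q gradf \<Psi> xt Hh) p"
  shows "r - gradf xt - Hh p \<in> subdiff \<Psi> (xt + p)"
proof -
  define q where "q w = gradf xt \<bullet> w + 1/2 * (w \<bullet> Hh w)" for w
  have Q: "isqa_Q gradf \<Psi> xt Hh w = ereal (q w) + \<Psi> (xt + w) - \<Psi> xt" for w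
    by (simp add: isqa_Q_def q_def)
  obtain C where C: "\<Psi> xt = ereal C" using fin by (cases "\<Psi> xt") auto
  from r have "\<bar>isqa_Q gradf \<Psi> xt Hh p\<bar> < \<infinity>"
    and Q_sub: "\<And>w. isqa_Q gradf \<Psi> xt Hh w \<ge> isqa_Q gradf \<Psi> xt Hh p + ereal (r \<bullet> (w - p))"
    by (auto simp: subdiff_def)
  then obtain A where A: "\<Psi> (xt + p) = ereal A"
    using no_minf[of "xt + p"] by (cases "\<Psi> (xt + p)") (auto simp: Q C)
  define u where "u = r - gradf xt - Hh p"
  have "\<Psi> z \<ge> ereal (A + u \<bullet> (z - (xt + p)))" for z
  proof (cases "\<Psi> z")
    case (real B)
    define d where "d = z - (xt + p)"
    have "u \<bullet> d \<le> B - A + s * (d \<bullet> Hh d / 2)" if "0 < s" "s \<le> 1" for s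
    proof -
      have "\<Psi> (xt + (p + s *\<^sub>R d)) \<le> ereal (A + s * (B - A))"
        using convex_ext_chord_le[OF conv A real] that by (simp add: d_def add.assoc)
      moreover have "ereal (q p) + ereal A - ereal C + ereal (s * (r \<bullet> d))
          \<le> ereal (q (p + s *\<^sub>R d)) + \<Psi> (xt + (p + s *\<^sub>R d)) - ereal C"
        using Q_sub[of "p + s *\<^sub>R d"] by (simp add: Q A C)
      ultimately have "q p + A + s * (r \<bullet> d) \<le> q (p + s *\<^sub>R d) + A + s * (B - A)"
        using no_minf[of "xt + (p + s *\<^sub>R d)"]
        by (cases "\<Psi> (xt + (p + s *\<^sub>R d))") auto
      then have "s * (u \<bullet> d) \<le> s * (B - A + s * (d \<bullet> Hh d / 2))"
        using quadratic_form_expansion[OF lin sym, of "gradf xt" p s d]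
        by (simp add: q_def u_def power2_eq_square algebra_simps)
      then show ?thesis using \<open>0 < s\<close> by simp
    qed
    then have "u \<bullet> d \<le> B - A" by (rule le_of_forall_small_pos)
    then show ?thesis by (simp add: real d_def)
  qed (use no_minf in auto)
  then show ?thesis using A by (simp add: subdiff_def u_def)
qed

lemma subdiff_monotone:
  assumes "u \<in> subdiff \<Psi> y" "w \<in> subdiff \<Psi> z"
  shows "0 \<le> (u - w) \<bullet> (y - z)"
proof -
  obtain a b where "\<Psi> y = ereal a" "\<Psi> z = ereal b"
    using assms unfolding subdiff_def by (cases "\<Psi> y"; cases "\<Psi> z") auto
  moreover from assms have "\<Psi> z \<ge> \<Psi> y + ereal (u \<bullet> (z - y))" "\<Psi> y \<ge> \<Psi> z + ereal (w \<bullet> (y - z))"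
    unfolding subdiff_def by auto
  ultimately have "b \<ge> a - u \<bullet> (y - z)" "a \<ge> b + w \<bullet> (y - z)"
    by (auto simp: inner_diff_right)
  then show ?thesis by (simp add: inner_diff_left)
qed

lemma subdiff_coercive_gap_bound:
  fixes Hh :: "'a::real_inner \<Rightarrow> 'a"
  assumes "0 < m" and lower: "\<And>v. m * (v \<bullet> v) \<le> v \<bullet> Hh v"
    and "u \<in> subdiff \<Psi> y" "w \<in> subdiff \<Psi> z" and gap: "u - w = a - Hh (y - z)"
  shows "norm (y - z) \<le> norm a / m"
proof -
  have "m * (norm (y - z) * norm (y - z)) \<le> (y - z) \<bullet> Hh (y - z)"
    using lower[of "y - z"] by (simp add: power2_norm_eq_inner[symmetric] power2_eq_square)
  also have "\<dots> \<le> a \<bullet> (y - z)"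
  proof -
    have "0 \<le> (a - Hh (y - z)) \<bullet> (y - z)"
      using subdiff_monotone[OF \<open>u \<in> subdiff \<Psi> y\<close> \<open>w \<in> subdiff \<Psi> z\<close>] unfolding gap .
    moreover have "(a - Hh (y - z)) \<bullet> (y - z) = a \<bullet> (y - z) - (y - z) \<bullet> Hh (y - z)"
      by (simp only: inner_diff_left inner_commute[of "Hh (y - z)"])
    ultimately show ?thesis by linarith
  qed
  also have "\<dots> \<le> norm a * norm (y - z)" by (rule norm_cauchy_schwarz)
  finally have "m * norm (y - z) \<le> norm a"
    by (cases "y = z") (auto simp: mult.assoc mult_le_cancel_right_pos)
  then show ?thesis using \<open>0 < m\<close> by (simp add: field_simps)
qed

lemma isqa_step_estimate:
  fixes gradf :: "'a::real_inner \<Rightarrow> 'a" and Hh :: "'a \<Rightarrow> 'a"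
  assumes lin: "linear Hh" and sym: "\<And>u v. Hh u \<bullet> v = u \<bullet> Hh v"
    and "0 < m" and "0 \<le> M"
    and lower: "\<And>v. m * (v \<bullet> v) \<le> v \<bullet> Hh v" and upper: "\<And>v. v \<bullet> Hh v \<le> M * (v \<bullet> v)"
    and "0 \<le> Lg" and lip: "\<And>u v. norm (gradf u - gradf v) \<le> Lg * norm (u - v)"
    and sub: "r - gradf xt - Hh p \<in> subdiff \<Psi> (xt + p)"
    and opt: "- gradf xs \<in> subdiff \<Psi> xs"
  shows "norm (xt + p - xs) + norm (r - gradf xt - Hh p + gradf xs)
           \<le> (1 + Lg + M) * (1 + (1 + M) / m) * (norm r + norm (xt - xs))"
proof -
  define e d A \<rho> where "e = xt + p - xs" and "d = xt - xs" and "A = 1 + Lg + M"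
    and "\<rho> = norm r + norm (xt - xs)"
  have psd: "0 \<le> v \<bullet> Hh v" for v
    by (rule order_trans[OF mult_nonneg_nonneg lower]) (use \<open>0 < m\<close> in auto)
  have Hh_le: "norm (Hh v) \<le> M * norm v" for v
    by (rule psd_operator_norm_le[OF lin sym psd upper \<open>0 \<le> M\<close>])
  define a where "a = r - (gradf xt - gradf xs) + Hh d"
  have a_le: "norm a \<le> A * \<rho>"
  proof -
    have "norm a \<le> norm r + norm (gradf xt - gradf xs) + norm (Hh d)"
      unfolding a_def by (metis norm_triangle_ineq norm_triangle_ineq4 add_right_mono order.trans)
    also have "\<dots> \<le> norm r + Lg * norm d + M * norm d"
      using lip[of xt xs] Hh_le[of d] by (simp add: d_def)
    also have "\<dots> \<le> A * \<rho>"
      using \<open>0 \<le> Lg\<close> \<open>0 \<le> M\<close> by (simp add: A_def \<rho>_def d_def algebra_simps)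
    finally show ?thesis .
  qed
  have gap: "r - gradf xt - Hh p + gradf xs = a - Hh e"
    using linear_diff[OF lin, of e d] by (simp add: a_def e_def d_def algebra_simps)
  have e_le: "norm e \<le> A * \<rho> / m"
    using subdiff_coercive_gap_bound[OF \<open>0 < m\<close> lower sub opt] gap a_le \<open>0 < m\<close>
    by (simp add: e_def divide_right_mono order_trans)
  have "norm e + norm (a - Hh e) \<le> (1 + M) * norm e + A * \<rho>"
    using norm_triangle_ineq4[of a "Hh e"] Hh_le[of e] a_le by (simp add: algebra_simps)
  also have "\<dots> \<le> (1 + M) * (A * \<rho> / m) + A * \<rho>"
    using mult_left_mono[OF e_le, of "1 + M"] \<open>0 \<le> M\<close> by simp
  also have "\<dots> = A * (1 + (1 + M) / m) * \<rho>" by (simp add: field_simps)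
  finally show ?thesis by (simp add: gap e_def A_def \<rho>_def)
qed

text \<open>\<open>isqa_Q\<close> subtracts \<open>\<Psi> (x t)\<close>; the descent condition keeps this value finite along the iterates.\<close>

lemma isqa_iterates_finite:
  fixes \<Psi> :: "'a::real_inner \<Rightarrow> ereal"
  assumes no_minf: "\<And>y. \<Psi> y \<noteq> -\<infinity>" and start: "\<Psi> (x 0) < \<infinity>"
    and model_sub: "\<And>t. subdiff (isqa_Q gradf \<Psi> (x t) (H t)) (p t) \<noteq> {}"
    and descent: "\<And>t. ereal (f (x (Suc t))) + \<Psi> (x (Suc t))
        \<le> ereal (f (x t)) + \<Psi> (x t) + ereal (c t) * isqa_Q gradf \<Psi> (x t) (H t) (p t)"
  shows "\<bar>\<Psi> (x t)\<bar> < \<infinity>"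
proof (induction t)
  case 0
  then show ?case using start no_minf[of "x 0"] by (cases "\<Psi> (x 0)") auto
next
  case (Suc t)
  have "\<bar>isqa_Q gradf \<Psi> (x t) (H t) (p t)\<bar> < \<infinity>"
    using model_sub[of t] by (auto simp: subdiff_def)
  then show ?case
    using descent[of t] Suc no_minf[of "x (Suc t)"]
    by (cases "\<Psi> (x t)"; cases "\<Psi> (x (Suc t))"; cases "isqa_Q gradf \<Psi> (x t) (H t) (p t)") auto
qed

lemma isqa_unit_step_identified:
  fixes gradf :: "'a::real_inner \<Rightarrow> 'a" and \<Psi> :: "'a \<Rightarrow> ereal" and Hh :: "'a \<Rightarrow> 'a"
  assumes identify: "\<forall>y w. norm (y - xs) < \<eta> \<and> norm (w + gradf xs) < \<eta> \<and> w \<in> subdiff \<Psi> y \<longrightarrow> y \<in> Mf"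
    and conv: "convex_ext \<Psi>" and no_minf: "\<And>y. \<Psi> y \<noteq> -\<infinity>" and fin: "\<bar>\<Psi> xt\<bar> < \<infinity>"
    and lin: "linear Hh" and sym: "\<And>u v. Hh u \<bullet> v = u \<bullet> Hh v" and "0 < m" "0 \<le> M"
    and lower: "\<And>v. m * (v \<bullet> v) \<le> v \<bullet> Hh v" and upper: "\<And>v. v \<bullet> Hh v \<le> M * (v \<bullet> v)"
    and "0 \<le> Lg" and lip: "\<And>u v. norm (gradf u - gradf v) \<le> Lg * norm (u - v)"
    and opt: "- gradf xs \<in> subdiff \<Psi> xs"
    and r: "r \<in> subdiff (isqa_Q gradf \<Psi> xt Hh) p" and "norm r \<le> \<kappa>" "norm (xt - xs) \<le> \<kappa>"
    and small: "2 * ((1 + Lg + M) * (1 + (1 + M) / m)) * \<kappa> < \<eta>"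
  shows "xt + p \<in> Mf"
proof (rule identify[rule_format, OF conjI[OF _ conjI]])
  have sub: "r - gradf xt - Hh p \<in> subdiff \<Psi> (xt + p)"
    by (rule subdiff_isqa_Q_shift[OF conv no_minf lin sym fin r])
  have "norm (xt + p - xs) + norm (r - gradf xt - Hh p + gradf xs)
      \<le> (1 + Lg + M) * (1 + (1 + M) / m) * (norm r + norm (xt - xs))"
    by (rule isqa_step_estimate[OF lin sym \<open>0 < m\<close> \<open>0 \<le> M\<close> lower upper \<open>0 \<le> Lg\<close> lip sub opt])
  also have "\<dots> \<le> (1 + Lg + M) * (1 + (1 + M) / m) * (2 * \<kappa>)"
    using \<open>norm r \<le> \<kappa>\<close> \<open>norm (xt - xs) \<le> \<kappa>\<close> \<open>0 < m\<close> \<open>0 \<le> M\<close> \<open>0 \<le> Lg\<close>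
    by (intro mult_left_mono) auto
  also have "\<dots> < \<eta>" using small by (simp add: algebra_simps)
  finally have "norm (xt + p - xs) + norm (r - gradf xt - Hh p + gradf xs) < \<eta>" .
  then show "norm (xt + p - xs) < \<eta>" "norm (r - gradf xt - Hh p + gradf xs) < \<eta>"
    using norm_ge_zero[of "xt + p - xs"] norm_ge_zero[of "r - gradf xt - Hh p + gradf xs"] by linarith+
  show "r - gradf xt - Hh p \<in> subdiff \<Psi> (xt + p)" by (fact sub)
qed

section \<open>Moving onto a \<open>C\<^sup>2\<close> manifold along its normal space\<close>

lemma C2_on_imp_continuous_gradient:
  assumes "C2_on U \<phi>"
  obtains G where "\<And>y. y \<in> U \<Longrightarrow> (\<phi> has_derivative (\<lambda>h. G y \<bullet> h)) (at y)" and "continuous_on U G"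
proof -
  from assms obtain G G2 where G: "\<forall>y\<in>U. (\<phi> has_derivative (\<lambda>h. G y \<bullet> h)) (at y)"
    and G2: "\<forall>y\<in>U. (G has_derivative blinfun_apply (G2 y)) (at y)"
    unfolding C2_on_def by blast
  have "continuous_on U G"
    by (rule continuous_at_imp_continuous_on) (use G2 has_derivative_continuous in blast)
  with G that show ?thesis by blast
qed

lemma linear_approx_bound_from_gradient:
  fixes \<phi> :: "'a::euclidean_space \<Rightarrow> real"
  assumes "convex S" and der: "\<And>\<xi>. \<xi> \<in> S \<Longrightarrow> (\<phi> has_derivative (\<lambda>h. G \<xi> \<bullet> h)) (at \<xi>)"
    and close: "\<And>\<xi>. \<xi> \<in> S \<Longrightarrow> norm (G \<xi> - g) \<le> \<eta>" and "a1 \<in> S" "a2 \<in> S"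
  shows "\<bar>\<phi> a1 - \<phi> a2 - g \<bullet> (a1 - a2)\<bar> \<le> \<eta> * norm (a1 - a2)"
proof -
  have "norm ((\<lambda>y. \<phi> y - g \<bullet> y) a1 - (\<lambda>y. \<phi> y - g \<bullet> y) a2) \<le> \<eta> * norm (a1 - a2)"
  proof (rule differentiable_bound[OF \<open>convex S\<close> _ _ \<open>a1 \<in> S\<close> \<open>a2 \<in> S\<close>])
    fix \<xi> assume "\<xi> \<in> S"
    show "((\<lambda>y. \<phi> y - g \<bullet> y) has_derivative (\<lambda>h. G \<xi> \<bullet> h - g \<bullet> h)) (at \<xi> within S)"
      by (rule has_derivative_diff[OF has_derivative_at_withinI[OF der[OF \<open>\<xi> \<in> S\<close>]]
          bounded_linear_imp_has_derivative[OF bounded_linear_inner_right]])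
    show "onorm (\<lambda>h. G \<xi> \<bullet> h - g \<bullet> h) \<le> \<eta>"
    proof (rule onorm_le)
      fix h
      have "norm (G \<xi> \<bullet> h - g \<bullet> h) \<le> norm (G \<xi> - g) * norm h"
        using Cauchy_Schwarz_ineq2[of "G \<xi> - g" h] by (simp add: inner_diff_left)
      also have "\<dots> \<le> \<eta> * norm h" by (rule mult_right_mono[OF close[OF \<open>\<xi> \<in> S\<close>] norm_ge_zero])
      finally show "norm (G \<xi> \<bullet> h - g \<bullet> h) \<le> \<eta> * norm h" .
    qed
  qed
  then show ?thesis by (simp add: inner_diff_right algebra_simps)
qed

lemma C2_family_uniform_linear_approx:
  fixes \<Phi> :: "nat \<Rightarrow> 'a::euclidean_space \<Rightarrow> real"
  assumes "open U" "x \<in> U" and C2: "\<forall>i<d. C2_on U (\<Phi> i)"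
  shows "\<exists>g. (\<forall>i<d. (\<Phi> i has_derivative (\<lambda>h. g i \<bullet> h)) (at x)) \<and>
           (\<forall>\<eta>>0. \<exists>\<rho>>0. \<forall>i<d. \<forall>a1\<in>ball x \<rho>. \<forall>a2\<in>ball x \<rho>.
              \<bar>\<Phi> i a1 - \<Phi> i a2 - g i \<bullet> (a1 - a2)\<bar> \<le> \<eta> * norm (a1 - a2))"
proof -
  have "\<forall>i. \<exists>G. i < d \<longrightarrow> (\<forall>y\<in>U. (\<Phi> i has_derivative (\<lambda>h. G y \<bullet> h)) (at y)) \<and> continuous_on U G"
    by (metis C2 C2_on_imp_continuous_gradient)
  then obtain G where der: "\<And>i y. i < d \<Longrightarrow> y \<in> U \<Longrightarrow> (\<Phi> i has_derivative (\<lambda>h. G i y \<bullet> h)) (at y)"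
    and cont: "\<And>i. i < d \<Longrightarrow> continuous_on U (G i)"
    by metis
  have "\<exists>\<rho>>0. \<forall>i<d. \<forall>a1\<in>ball x \<rho>. \<forall>a2\<in>ball x \<rho>.
           \<bar>\<Phi> i a1 - \<Phi> i a2 - G i x \<bullet> (a1 - a2)\<bar> \<le> \<eta> * norm (a1 - a2)" if "\<eta> > 0" for \<eta>
  proof -
    have "\<forall>\<^sub>F \<xi> in nhds x. \<xi> \<in> U \<and> (\<forall>i\<in>{..<d}. dist (G i \<xi>) (G i x) < \<eta>)"
    proof (intro eventually_conj eventually_ball_finite ballI)
      show "\<forall>\<^sub>F \<xi> in nhds x. \<xi> \<in> U" using eventually_nhds_in_open assms by blast
      fix i assume "i \<in> {..<d}"
      then have "isCont (G i) x" using cont assms continuous_on_eq_continuous_at by blast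
      then show "\<forall>\<^sub>F \<xi> in nhds x. dist (G i \<xi>) (G i x) < \<eta>"
        unfolding isCont_def tendsto_at_iff_tendsto_nhds using \<open>\<eta> > 0\<close> by (rule tendstoD)
    qed simp
    then obtain \<rho> where "\<rho> > 0" and \<rho>: "\<And>\<xi>. dist \<xi> x < \<rho> \<Longrightarrow> \<xi> \<in> U \<and> (\<forall>i<d. dist (G i \<xi>) (G i x) < \<eta>)"
      unfolding eventually_nhds_metric by auto
    have "\<bar>\<Phi> i a1 - \<Phi> i a2 - G i x \<bullet> (a1 - a2)\<bar> \<le> \<eta> * norm (a1 - a2)"
      if "i < d" "a1 \<in> ball x \<rho>" "a2 \<in> ball x \<rho>" for i a1 a2
    proof (rule linear_approx_bound_from_gradient[OF convex_ball _ _ that(2,3)])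
      fix \<xi> assume "\<xi> \<in> ball x \<rho>"
      then have "dist \<xi> x < \<rho>" by (simp add: dist_commute)
      then show "(\<Phi> i has_derivative (\<lambda>h. G i \<xi> \<bullet> h)) (at \<xi>)" "norm (G i \<xi> - G i x) \<le> \<eta>"
        using \<rho> der \<open>i < d\<close> by (auto simp: dist_norm less_imp_le)
    qed
    then show ?thesis using \<open>\<rho> > 0\<close> by blast
  qed
  moreover have "\<forall>i<d. (\<Phi> i has_derivative (\<lambda>h. G i x \<bullet> h)) (at x)"
    using der assms by blast
  ultimately show ?thesis by (intro exI[of _ "\<lambda>i. G i x"]) blast
qed

lemma inner_dual_family_exists:
  fixes g :: "nat \<Rightarrow> 'a::euclidean_space"
  assumes onto: "\<And>v. \<exists>h. \<forall>i<d. g i \<bullet> h = v i"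
  obtains b where "\<And>i. i < d \<Longrightarrow> b i \<in> span (g ` {..<d})"
    and "\<And>i j. i < d \<Longrightarrow> j < d \<Longrightarrow> g j \<bullet> b i = (if j = i then 1 else 0)"
proof -
  have "\<exists>y\<in>span (g ` {..<d}). \<forall>j<d. g j \<bullet> y = (if j = i then 1 else 0)" for i
  proof -
    obtain h where h: "\<forall>j<d. g j \<bullet> h = (if j = i then 1 else 0)"
      using onto[of "\<lambda>j. if j = i then 1 else 0"] by blast
    obtain y z where "y \<in> span (g ` {..<d})" and z: "\<And>w. w \<in> span (g ` {..<d}) \<Longrightarrow> orthogonal z w"
      and "h = y + z"
      by (rule orthogonal_subspace_decomp_exists[of "g ` {..<d}" h]) blast
    have "g j \<bullet> z = 0" if "j < d" for j
    proof -
      have "orthogonal z (g j)" using z that by (simp add: span_base)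
      then show ?thesis by (simp add: orthogonal_def inner_commute)
    qed
    then have "\<forall>j<d. g j \<bullet> y = (if j = i then 1 else 0)"
      using h unfolding \<open>h = y + z\<close> by (simp add: inner_add_right)
    with \<open>y \<in> span (g ` {..<d})\<close> show ?thesis by blast
  qed
  then obtain b where "\<And>i. b i \<in> span (g ` {..<d}) \<and> (\<forall>j<d. g j \<bullet> b i = (if j = i then 1 else 0))"
    by metis
  with that show thesis by blast
qed

lemma inner_dual_sum:
  fixes g b :: "nat \<Rightarrow> 'a::real_inner"
  assumes dual: "\<And>i j. i < d \<Longrightarrow> j < d \<Longrightarrow> g j \<bullet> b i = (if j = i then 1 else 0)" and "j < d"
  shows "g j \<bullet> (\<Sum>i<d. c i *\<^sub>R b i) = c j"
proof -
  have "g j \<bullet> (\<Sum>i<d. c i *\<^sub>R b i) = (\<Sum>i<d. if j = i then c i else 0)"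
    unfolding inner_sum_right by (rule sum.cong) (auto simp: dual \<open>j < d\<close>)
  also have "\<dots> = c j" using \<open>j < d\<close> by (simp add: sum.delta')
  finally show ?thesis .
qed

lemma span_dual_expansion:
  fixes g :: "nat \<Rightarrow> 'a::real_inner"
  assumes b: "\<And>i. i < d \<Longrightarrow> b i \<in> span (g ` {..<d})"
    and dual: "\<And>i j. i < d \<Longrightarrow> j < d \<Longrightarrow> g j \<bullet> b i = (if j = i then 1 else 0)"
    and w: "w \<in> span (g ` {..<d})"
  shows "w = (\<Sum>i<d. (g i \<bullet> w) *\<^sub>R b i)"
proof -
  define w' where "w' = w - (\<Sum>i<d. (g i \<bullet> w) *\<^sub>R b i)"
  have "w' \<in> span (g ` {..<d})"
    unfolding w'_def by (intro span_diff span_sum span_scale w b) auto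
  moreover have "orthogonal w' (g j)" if "j < d" for j
  proof -
    have "g j \<bullet> w' = 0"
      using inner_dual_sum[OF dual that, of "\<lambda>i. g i \<bullet> w"] by (simp add: w'_def inner_diff_right)
    then show ?thesis by (simp add: orthogonal_def inner_commute)
  qed
  ultimately have "orthogonal w' w'"
    by (intro orthogonal_to_span[of w' "g ` {..<d}" w']) auto
  then have "w' = 0" by (simp add: orthogonal_def)
  then show ?thesis by (simp add: w'_def)
qed

lemma span_gradients_subset_chart_normal_space:
  assumes "\<And>i h. i < d \<Longrightarrow> frechet_derivative (\<Phi> i) (at x) h = g i \<bullet> h"
  shows "span (g ` {..<d}) \<subseteq> chart_normal_space x d \<Phi>"
proof
  fix v assume v: "v \<in> span (g ` {..<d})"
  have "v \<bullet> h = 0" if "\<forall>i<d. frechet_derivative (\<Phi> i) (at x) h = 0" for h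
  proof -
    have "orthogonal h v"
      by (rule orthogonal_to_span[OF v]) (use that assms in \<open>auto simp: orthogonal_def inner_commute\<close>)
    then show ?thesis by (simp add: orthogonal_def inner_commute)
  qed
  then show "v \<in> chart_normal_space x d \<Phi>" by (simp add: chart_normal_space_def)
qed

lemma norm_sum_scaleR_le:
  assumes "\<And>i. i \<in> I \<Longrightarrow> \<bar>c i\<bar> \<le> K"
  shows "norm (\<Sum>i\<in>I. c i *\<^sub>R b i) \<le> K * (\<Sum>i\<in>I. norm (b i))"
proof -
  have "norm (\<Sum>i\<in>I. c i *\<^sub>R b i) \<le> (\<Sum>i\<in>I. \<bar>c i\<bar> * norm (b i))"
    using norm_sum[of "\<lambda>i. c i *\<^sub>R b i" I] by simp
  also have "\<dots> \<le> (\<Sum>i\<in>I. K * norm (b i))"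
    by (intro sum_mono mult_right_mono assms norm_ge_zero)
  finally show ?thesis by (simp add: sum_distrib_left)
qed

lemma chord_step_contraction:
  fixes \<Phi> :: "nat \<Rightarrow> 'a::real_inner \<Rightarrow> real"
  assumes expand: "n1 - n2 = (\<Sum>i<d. (g i \<bullet> (n1 - n2)) *\<^sub>R b i)"
    and approx: "\<And>i. i < d \<Longrightarrow> \<bar>\<Phi> i (y + n1) - \<Phi> i (y + n2) - g i \<bullet> (n1 - n2)\<bar> \<le> \<eta> * norm (n1 - n2)"
    and contraction: "\<eta> * (\<Sum>i<d. norm (b i)) \<le> 1/2"
  shows "norm ((n1 - (\<Sum>i<d. \<Phi> i (y + n1) *\<^sub>R b i)) - (n2 - (\<Sum>i<d. \<Phi> i (y + n2) *\<^sub>R b i)))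
           \<le> 1/2 * norm (n1 - n2)"
proof -
  have "(n1 - (\<Sum>i<d. \<Phi> i (y + n1) *\<^sub>R b i)) - (n2 - (\<Sum>i<d. \<Phi> i (y + n2) *\<^sub>R b i))
      = (n1 - n2) - (\<Sum>i<d. (\<Phi> i (y + n1) - \<Phi> i (y + n2)) *\<^sub>R b i)"
    by (simp add: sum_subtractf scaleR_diff_left)
  also have "\<dots> = (\<Sum>i<d. (g i \<bullet> (n1 - n2) - (\<Phi> i (y + n1) - \<Phi> i (y + n2))) *\<^sub>R b i)"
    by (subst expand) (simp add: sum_subtractf scaleR_diff_left)
  also have "norm \<dots> \<le> (\<eta> * norm (n1 - n2)) * (\<Sum>i<d. norm (b i))"
    by (rule norm_sum_scaleR_le) (use approx in \<open>auto simp: abs_minus_commute\<close>)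
  also have "\<dots> \<le> 1/2 * norm (n1 - n2)"
    using mult_right_mono[OF contraction norm_ge_zero[of "n1 - n2"]] by (simp add: algebra_simps)
  finally show ?thesis .
qed

lemma subspace_zero_correction:
  fixes \<Phi> :: "nat \<Rightarrow> 'a::euclidean_space \<Rightarrow> real" and g b :: "nat \<Rightarrow> 'a"
  assumes S: "subspace S" and bS: "\<And>i. i < d \<Longrightarrow> b i \<in> S"
    and dual: "\<And>i j. i < d \<Longrightarrow> j < d \<Longrightarrow> g j \<bullet> b i = (if j = i then 1 else 0)"
    and expand: "\<And>w. w \<in> S \<Longrightarrow> w = (\<Sum>i<d. (g i \<bullet> w) *\<^sub>R b i)"
    and approx: "\<And>i n1 n2. i < d \<Longrightarrow> n1 \<in> S \<inter> cball 0 r \<Longrightarrow> n2 \<in> S \<inter> cball 0 r \<Longrightarrow>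
        \<bar>\<Phi> i (y + n1) - \<Phi> i (y + n2) - g i \<bullet> (n1 - n2)\<bar> \<le> \<eta> * norm (n1 - n2)"
    and contraction: "\<eta> * (\<Sum>i<d. norm (b i)) \<le> 1/2"
    and small: "norm (\<Sum>i<d. \<Phi> i y *\<^sub>R b i) \<le> r / 2"
  shows "\<exists>n\<in>S. norm n \<le> r \<and> (\<forall>i<d. \<Phi> i (y + n) = 0)"
proof -
  define D where "D = S \<inter> cball 0 r"
  \<comment> \<open>chord iteration with the frozen derivative: fixed points of \<open>T\<close> are common zeros of \<open>\<Phi> i (y + _)\<close>\<close>
  define T where "T n = n - (\<Sum>i<d. \<Phi> i (y + n) *\<^sub>R b i)" for n
  have "0 \<le> r" using small norm_ge_zero[of "\<Sum>i<d. \<Phi> i y *\<^sub>R b i"] by linarith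
  then have "0 \<in> D" using subspace_0[OF S] by (simp add: D_def)
  have T_lip: "norm (T n1 - T n2) \<le> 1/2 * norm (n1 - n2)" if "n1 \<in> D" "n2 \<in> D" for n1 n2
  proof -
    have "n1 - n2 \<in> S" using that subspace_diff[OF S] by (auto simp: D_def)
    then show ?thesis unfolding T_def
      by (rule chord_step_contraction[OF expand _ contraction]) (use approx that in \<open>auto simp: D_def\<close>)
  qed
  have "T ` D \<subseteq> D"
  proof safe
    fix n assume "n \<in> D"
    have "T n \<in> S"
      using \<open>n \<in> D\<close> bS unfolding T_def D_def
      by (auto intro!: subspace_diff[OF S] subspace_sum[OF S] subspace_scale[OF S])
    moreover have "norm (T n) \<le> norm (T n - T 0) + norm (T 0)"
      using norm_triangle_ineq[of "T n - T 0" "T 0"] by simp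
    moreover have "norm (T n - T 0) \<le> r / 2" "norm (T 0) \<le> r / 2"
      using T_lip[OF \<open>n \<in> D\<close> \<open>0 \<in> D\<close>] \<open>n \<in> D\<close> small by (auto simp: T_def D_def)
    ultimately show "T n \<in> D" by (simp add: D_def)
  qed
  moreover have "complete D"
    unfolding complete_eq_closed D_def by (intro closed_Int closed_subspace[OF S] closed_cball)
  ultimately have "\<exists>!n\<in>D. T n = n"
  proof (intro Banach_fix[of D "1/2" T])
    show "dist (T n1) (T n2) \<le> 1/2 * dist n1 n2" if "n1 \<in> D" "n2 \<in> D" for n1 n2
      using T_lip[OF that] by (simp add: dist_norm)
  qed (use \<open>0 \<in> D\<close> in auto)
  then obtain n where "n \<in> D" "T n = n" by blast
  then have "(\<Sum>i<d. \<Phi> i (y + n) *\<^sub>R b i) = 0" by (simp add: T_def)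
  then have "\<Phi> j (y + n) = 0" if "j < d" for j
    using inner_dual_sum[OF dual that, of "\<lambda>i. \<Phi> i (y + n)"] by simp
  with \<open>n \<in> D\<close> show ?thesis by (auto simp: D_def)
qed

lemma dual_frame_local_zero_correction:
  fixes \<Phi> :: "nat \<Rightarrow> 'a::euclidean_space \<Rightarrow> real" and g b :: "nat \<Rightarrow> 'a"
  assumes S: "subspace S" and bS: "\<And>i. i < d \<Longrightarrow> b i \<in> S"
    and dual: "\<And>i j. i < d \<Longrightarrow> j < d \<Longrightarrow> g j \<bullet> b i = (if j = i then 1 else 0)"
    and expand: "\<And>w. w \<in> S \<Longrightarrow> w = (\<Sum>i<d. (g i \<bullet> w) *\<^sub>R b i)"
    and approx: "\<forall>\<eta>>0. \<exists>\<rho>>0. \<forall>i<d. \<forall>a1\<in>ball x \<rho>. \<forall>a2\<in>ball x \<rho>.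
           \<bar>\<Phi> i a1 - \<Phi> i a2 - g i \<bullet> (a1 - a2)\<bar> \<le> \<eta> * norm (a1 - a2)"
    and cont: "\<forall>i<d. isCont (\<Phi> i) x" and zero: "\<forall>i<d. \<Phi> i x = 0" and "\<epsilon> > 0"
  shows "\<exists>\<rho>>0. \<forall>y\<in>ball x \<rho>. \<exists>n\<in>S. norm n < \<epsilon> \<and> (\<forall>i<d. \<Phi> i (y + n) = 0)"
proof -
  define \<eta> where "\<eta> = 1 / (2 * (1 + (\<Sum>i<d. norm (b i))))"
  have "\<eta> > 0" "\<eta> * (\<Sum>i<d. norm (b i)) \<le> 1/2"
    using sum_nonneg[of "{..<d}" "\<lambda>i. norm (b i)"] by (auto simp: \<eta>_def field_simps)
  then obtain \<rho>0 where "\<rho>0 > 0" and lin: "\<forall>i<d. \<forall>a1\<in>ball x \<rho>0. \<forall>a2\<in>ball x \<rho>0.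
           \<bar>\<Phi> i a1 - \<Phi> i a2 - g i \<bullet> (a1 - a2)\<bar> \<le> \<eta> * norm (a1 - a2)"
    using approx by blast
  define r where "r = min (\<epsilon> / 2) (\<rho>0 / 2)"
  have "r > 0" using \<open>\<epsilon> > 0\<close> \<open>\<rho>0 > 0\<close> by (simp add: r_def)
  have "isCont (\<lambda>y. \<Sum>i<d. \<Phi> i y *\<^sub>R b i) x"
    using cont by (auto intro!: continuous_intros)
  then have "((\<lambda>y. \<Sum>i<d. \<Phi> i y *\<^sub>R b i) \<longlongrightarrow> (\<Sum>i<d. \<Phi> i x *\<^sub>R b i)) (nhds x)"
    unfolding isCont_def by (rule tendsto_at_iff_tendsto_nhds[THEN iffD1])
  then have "((\<lambda>y. \<Sum>i<d. \<Phi> i y *\<^sub>R b i) \<longlongrightarrow> 0) (nhds x)" using zero by simp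
  from tendstoD[OF this, of "r / 2"] \<open>r > 0\<close>
  obtain \<rho>1 where "\<rho>1 > 0" and \<rho>1: "\<And>y. dist y x < \<rho>1 \<Longrightarrow> norm (\<Sum>i<d. \<Phi> i y *\<^sub>R b i) < r / 2"
    unfolding eventually_nhds_metric by auto
  have "\<exists>n\<in>S. norm n < \<epsilon> \<and> (\<forall>i<d. \<Phi> i (y + n) = 0)" if y: "y \<in> ball x (min \<rho>1 (\<rho>0 / 2))" for y
  proof -
    have near: "y + n \<in> ball x \<rho>0" if "norm n \<le> r" for n
    proof -
      have "dist x (y + n) \<le> dist x y + norm n"
        using norm_triangle_ineq4[of "x - y" n] by (simp add: dist_norm diff_diff_eq)
      moreover have "dist x y < \<rho>0 / 2" "r \<le> \<rho>0 / 2" using y by (auto simp: r_def)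
      ultimately show ?thesis using that by simp
    qed
    have "\<exists>n\<in>S. norm n \<le> r \<and> (\<forall>i<d. \<Phi> i (y + n) = 0)"
    proof (rule subspace_zero_correction[where S = S and d = d and b = b and g = g and \<Phi> = \<Phi>])
      show "norm (\<Sum>i<d. \<Phi> i y *\<^sub>R b i) \<le> r / 2" using \<rho>1[of y] y by (simp add: dist_commute)
      fix i n1 n2 assume "i < d" "n1 \<in> S \<inter> cball 0 r" "n2 \<in> S \<inter> cball 0 r"
      then have "y + n1 \<in> ball x \<rho>0" "y + n2 \<in> ball x \<rho>0" using near by auto
      then have "\<bar>\<Phi> i (y + n1) - \<Phi> i (y + n2) - g i \<bullet> ((y + n1) - (y + n2))\<bar>
          \<le> \<eta> * norm ((y + n1) - (y + n2))"
        using lin \<open>i < d\<close> by blast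
      then show "\<bar>\<Phi> i (y + n1) - \<Phi> i (y + n2) - g i \<bullet> (n1 - n2)\<bar> \<le> \<eta> * norm (n1 - n2)" by simp
    qed (use S bS dual expand \<open>\<eta> * _ \<le> 1/2\<close> in auto)
    then show ?thesis using \<open>\<epsilon> > 0\<close> by (force simp: r_def)
  qed
  then show ?thesis using \<open>\<rho>1 > 0\<close> \<open>\<rho>0 > 0\<close> by (intro exI[of _ "min \<rho>1 (\<rho>0 / 2)"]) auto
qed

lemma C2_manifold_chart_normal_correction:
  fixes \<Phi> :: "nat \<Rightarrow> 'a::euclidean_space \<Rightarrow> real"
  assumes chart: "C2_manifold_chart Mf x U d \<Phi>" and "x \<in> Mf"
  obtains S where "subspace S" "S \<subseteq> chart_normal_space x d \<Phi>"
    and "\<And>\<epsilon>. \<epsilon> > 0 \<Longrightarrow> \<exists>\<rho>>0. \<forall>y\<in>ball x \<rho>. \<exists>n\<in>S. y + n \<in> Mf \<and> norm n < \<epsilon>"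
proof -
  from chart have "open U" "x \<in> U" and C2: "\<forall>i<d. C2_on U (\<Phi> i)"
    and zero_set: "Mf \<inter> U = {y\<in>U. \<forall>i<d. \<Phi> i y = 0}"
    and onto: "\<And>v. \<exists>h. \<forall>i<d. frechet_derivative (\<Phi> i) (at x) h = v i"
    unfolding C2_manifold_chart_def by auto
  obtain g where der: "\<forall>i<d. (\<Phi> i has_derivative (\<lambda>h. g i \<bullet> h)) (at x)"
    and approx: "\<forall>\<eta>>0. \<exists>\<rho>>0. \<forall>i<d. \<forall>a1\<in>ball x \<rho>. \<forall>a2\<in>ball x \<rho>.
           \<bar>\<Phi> i a1 - \<Phi> i a2 - g i \<bullet> (a1 - a2)\<bar> \<le> \<eta> * norm (a1 - a2)"
    using C2_family_uniform_linear_approx[OF \<open>open U\<close> \<open>x \<in> U\<close> C2] by (elim exE conjE)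
  have fd: "frechet_derivative (\<Phi> i) (at x) h = g i \<bullet> h" if "i < d" for i h
    using frechet_derivative_at[OF der[rule_format, OF that]] by simp
  define S where "S = span (g ` {..<d})"
  obtain b where bS: "\<And>i. i < d \<Longrightarrow> b i \<in> S"
    and dual: "\<And>i j. i < d \<Longrightarrow> j < d \<Longrightarrow> g j \<bullet> b i = (if j = i then 1 else 0)"
  proof (rule inner_dual_family_exists)
    show "\<exists>h. \<forall>i<d. g i \<bullet> h = v i" for v using onto[of v] fd by simp
  qed (auto simp: S_def)
  have expand: "\<And>w. w \<in> S \<Longrightarrow> w = (\<Sum>i<d. (g i \<bullet> w) *\<^sub>R b i)"
    using span_dual_expansion[OF bS[unfolded S_def] dual] by (simp add: S_def)
  have cont: "\<forall>i<d. isCont (\<Phi> i) x" using der has_derivative_continuous by blast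
  have zero: "\<forall>i<d. \<Phi> i x = 0" using zero_set \<open>x \<in> Mf\<close> \<open>x \<in> U\<close> by blast
  obtain \<delta> where "\<delta> > 0" "ball x \<delta> \<subseteq> U" using \<open>open U\<close> \<open>x \<in> U\<close> open_contains_ball by blast
  show thesis
  proof (rule that)
    show "subspace S" by (simp add: S_def subspace_span)
    show "S \<subseteq> chart_normal_space x d \<Phi>"
      unfolding S_def by (rule span_gradients_subset_chart_normal_space) (rule fd)
    fix \<epsilon> :: real assume "\<epsilon> > 0"
    then obtain \<rho> where "\<rho> > 0"
      and \<rho>: "\<forall>y\<in>ball x \<rho>. \<exists>n\<in>S. norm n < min \<epsilon> (\<delta> / 2) \<and> (\<forall>i<d. \<Phi> i (y + n) = 0)"
      using dual_frame_local_zero_correction[OF \<open>subspace S\<close> _ _ _ approx cont zero, of b "min \<epsilon> (\<delta> / 2)"]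
        bS dual expand \<open>\<delta> > 0\<close> by auto
    have "\<exists>n\<in>S. y + n \<in> Mf \<and> norm n < \<epsilon>" if y: "y \<in> ball x (min \<rho> (\<delta> / 2))" for y
    proof -
      have "y \<in> ball x \<rho>" using y by simp
      with \<rho> obtain n where "n \<in> S" "norm n < min \<epsilon> (\<delta> / 2)" and n_zero: "\<forall>i<d. \<Phi> i (y + n) = 0"
        by blast
      have "dist x (y + n) \<le> dist x y + norm n"
        using norm_triangle_ineq4[of "x - y" n] by (simp add: dist_norm diff_diff_eq)
      then have "y + n \<in> U" using y \<open>norm n < min \<epsilon> (\<delta> / 2)\<close> \<open>ball x \<delta> \<subseteq> U\<close> by auto
      then show ?thesis using zero_set n_zero \<open>n \<in> S\<close> \<open>norm n < min \<epsilon> (\<delta> / 2)\<close> by auto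
    qed
    then show "\<exists>\<rho>>0. \<forall>y\<in>ball x \<rho>. \<exists>n\<in>S. y + n \<in> Mf \<and> norm n < \<epsilon>"
      using \<open>\<rho> > 0\<close> \<open>\<delta> > 0\<close> by (intro exI[of _ "min \<rho> (\<delta> / 2)"]) auto
  qed
qed

section \<open>Identification under partial smoothness\<close>

lemma subspace_chart_normal_space: "subspace (chart_normal_space x d \<Phi>)"
  unfolding subspace_def chart_normal_space_def by (simp add: inner_add_left)

lemma rel_interior_contains_affine_directions:
  fixes C :: "'a::euclidean_space set"
  assumes "v \<in> rel_interior C" and aff: "affine hull C = (\<lambda>u. a + u) ` N" and "subspace N"
  obtains e where "e > 0" "\<And>l. l \<in> N \<Longrightarrow> norm l \<le> 1 \<Longrightarrow> v + e *\<^sub>R l \<in> C"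
proof -
  from assms obtain e where "e > 0" and "v \<in> C" and ball_C: "ball v e \<inter> affine hull C \<subseteq> C"
    unfolding mem_rel_interior_ball by blast
  have "v \<in> affine hull C" using \<open>v \<in> C\<close> by (rule hull_inc)
  then obtain n0 where "n0 \<in> N" "v = a + n0" unfolding aff by blast
  show thesis
  proof (rule that)
    fix l assume "l \<in> N" "norm l \<le> 1"
    have "n0 + (e / 2) *\<^sub>R l \<in> N"
      using \<open>subspace N\<close> \<open>n0 \<in> N\<close> \<open>l \<in> N\<close> by (simp add: subspace_add subspace_scale)
    then have "v + (e / 2) *\<^sub>R l \<in> affine hull C"
      unfolding aff \<open>v = a + n0\<close> by (simp add: add.assoc)
    moreover have "v + (e / 2) *\<^sub>R l \<in> ball v e"
      using \<open>e > 0\<close> \<open>norm l \<le> 1\<close> by (simp add: dist_norm)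
    ultimately show "v + (e / 2) *\<^sub>R l \<in> C" using ball_C by blast
  qed (use \<open>e > 0\<close> in simp)
qed

lemma subdiff_limit_direction_halfspace:
  fixes \<Psi> :: "'a::euclidean_space \<Rightarrow> ereal"
  assumes cont: "subdiff_continuous_rel \<Psi> x M"
    and "Z \<longlonglongrightarrow> x" "\<forall>k. Z k \<in> M" and "V \<longlonglongrightarrow> v" and V: "\<And>k. V k \<in> subdiff \<Psi> (Y k)"
    and D: "(\<lambda>k. (1 / norm (Z k - Y k)) *\<^sub>R (Z k - Y k)) \<longlonglongrightarrow> l"
    and "w \<in> subdiff \<Psi> x"
  shows "0 \<le> (w - v) \<bullet> l"
proof -
  obtain W where "W \<longlonglongrightarrow> w" and W: "\<forall>\<^sub>F k in sequentially. W k \<in> subdiff \<Psi> (Z k)"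
    using cont \<open>Z \<longlonglongrightarrow> x\<close> \<open>\<forall>k. Z k \<in> M\<close> \<open>w \<in> subdiff \<Psi> x\<close>
    unfolding subdiff_continuous_rel_def by blast
  have "(\<lambda>k. (W k - V k) \<bullet> ((1 / norm (Z k - Y k)) *\<^sub>R (Z k - Y k))) \<longlonglongrightarrow> (w - v) \<bullet> l"
    using \<open>W \<longlonglongrightarrow> w\<close> \<open>V \<longlonglongrightarrow> v\<close> D by (intro tendsto_inner tendsto_diff)
  moreover have "\<forall>\<^sub>F k in sequentially. 0 \<le> (W k - V k) \<bullet> ((1 / norm (Z k - Y k)) *\<^sub>R (Z k - Y k))"
    using W
  proof eventually_elim
    case (elim k)
    show ?case using subdiff_monotone[OF elim V[of k]] by simp
  qed
  ultimately show ?thesis by (rule tendsto_lowerbound) simp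
qed

lemma subdiff_normal_approach_direction:
  fixes \<Psi> :: "'a::euclidean_space \<Rightarrow> ereal"
  assumes cont: "subdiff_continuous_rel \<Psi> x M" and "subspace S"
    and NS: "\<And>k. N k \<in> S" and N0: "\<And>k. N k \<noteq> 0" and "N \<longlonglongrightarrow> 0"
    and "Y \<longlonglongrightarrow> x" and "V \<longlonglongrightarrow> v" and V: "\<And>k. V k \<in> subdiff \<Psi> (Y k)"
    and YN: "\<And>k. Y k + N k \<in> M"
  shows "\<exists>l\<in>S. norm l = 1 \<and> (\<forall>w\<in>subdiff \<Psi> x. 0 \<le> (w - v) \<bullet> l)"
proof -
  define D where "D k = (1 / norm (N k)) *\<^sub>R N k" for k
  have "D k \<in> sphere 0 1" for k using N0[of k] by (simp add: D_def)
  then obtain l \<phi> where "l \<in> sphere 0 1" and "strict_mono \<phi>" and D_lim: "(D \<circ> \<phi>) \<longlonglongrightarrow> l"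
    using compact_imp_seq_compact[OF compact_sphere] unfolding seq_compact_def by metis
  have "D k \<in> S" for k using NS[of k] \<open>subspace S\<close> by (simp add: D_def subspace_scale)
  then have "l \<in> S"
    using closed_sequentially[OF closed_subspace[OF \<open>subspace S\<close>] _ D_lim] by simp
  moreover have "norm l = 1" using \<open>l \<in> sphere 0 1\<close> by simp
  moreover have "0 \<le> (w - v) \<bullet> l" if "w \<in> subdiff \<Psi> x" for w
  proof (rule subdiff_limit_direction_halfspace[OF cont, where Z = "\<lambda>k. Y (\<phi> k) + N (\<phi> k)"
        and Y = "\<lambda>k. Y (\<phi> k)" and V = "\<lambda>k. V (\<phi> k)", OF _ _ _ V _ that])
    have "(\<lambda>k. Y (\<phi> k) + N (\<phi> k)) \<longlonglongrightarrow> x + 0"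
      using LIMSEQ_subseq_LIMSEQ[OF \<open>Y \<longlonglongrightarrow> x\<close> \<open>strict_mono \<phi>\<close>]
        LIMSEQ_subseq_LIMSEQ[OF \<open>N \<longlonglongrightarrow> 0\<close> \<open>strict_mono \<phi>\<close>]
      by (intro tendsto_add) (simp_all add: comp_def)
    then show "(\<lambda>k. Y (\<phi> k) + N (\<phi> k)) \<longlonglongrightarrow> x" by simp
    show "\<forall>k. Y (\<phi> k) + N (\<phi> k) \<in> M" using YN by blast
    show "(\<lambda>k. V (\<phi> k)) \<longlonglongrightarrow> v"
      using LIMSEQ_subseq_LIMSEQ[OF \<open>V \<longlonglongrightarrow> v\<close> \<open>strict_mono \<phi>\<close>] by (simp add: comp_def)
    show "(\<lambda>k. (1 / norm (Y (\<phi> k) + N (\<phi> k) - Y (\<phi> k))) *\<^sub>R (Y (\<phi> k) + N (\<phi> k) - Y (\<phi> k)))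
        \<longlonglongrightarrow> l"
      using D_lim by (simp add: D_def comp_def)
  qed
  ultimately show ?thesis by blast
qed

lemma identification_from_normal_correction:
  fixes \<Psi> :: "'a::euclidean_space \<Rightarrow> ereal"
  assumes cont: "subdiff_continuous_rel \<Psi> x M" and "subspace S"
    and correct: "\<And>\<epsilon>. \<epsilon> > 0 \<Longrightarrow> \<exists>\<rho>>0. \<forall>y\<in>ball x \<rho>. \<exists>n\<in>S. y + n \<in> M \<and> norm n < \<epsilon>"
    and "e > 0" and push: "\<And>l. l \<in> S \<Longrightarrow> norm l \<le> 1 \<Longrightarrow> v + e *\<^sub>R l \<in> subdiff \<Psi> x"
  shows "\<exists>\<eta>>0. \<forall>y w. norm (y - x) < \<eta> \<and> norm (w - v) < \<eta> \<and> w \<in> subdiff \<Psi> y \<longrightarrow> y \<in> M"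
proof (rule ccontr)
  assume "\<not> ?thesis"
  then have bad: "\<exists>y w. norm (y - x) < \<eta> \<and> norm (w - v) < \<eta> \<and> w \<in> subdiff \<Psi> y \<and> y \<notin> M"
    if "\<eta> > 0" for \<eta>
    using that by blast
  have "\<exists>y w n. norm (y - x) < 1 / Suc k \<and> norm (w - v) < 1 / Suc k \<and> w \<in> subdiff \<Psi> y \<and> y \<notin> M
      \<and> n \<in> S \<and> y + n \<in> M \<and> norm n < 1 / Suc k" for k
  proof -
    obtain \<rho> where "\<rho> > 0" and \<rho>: "\<forall>y\<in>ball x \<rho>. \<exists>n\<in>S. y + n \<in> M \<and> norm n < 1 / Suc k"
      using correct[of "1 / Suc k"] by auto
    obtain y w where "norm (y - x) < min \<rho> (1 / Suc k)" "norm (w - v) < min \<rho> (1 / Suc k)"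
      and "w \<in> subdiff \<Psi> y" "y \<notin> M"
      using bad[of "min \<rho> (1 / Suc k)"] \<open>\<rho> > 0\<close> by auto
    moreover have "y \<in> ball x \<rho>"
      using \<open>norm (y - x) < min \<rho> (1 / Suc k)\<close> by (simp add: dist_norm norm_minus_commute)
    with \<rho> obtain n where "n \<in> S" "y + n \<in> M" "norm n < 1 / Suc k" by blast
    ultimately show ?thesis by auto
  qed
  then obtain Y V N where Y: "\<And>k. norm (Y k - x) < 1 / Suc k" and V: "\<And>k. norm (V k - v) < 1 / Suc k"
    and V_sub: "\<And>k. V k \<in> subdiff \<Psi> (Y k)" and Y_out: "\<And>k. Y k \<notin> M"
    and N: "\<And>k. N k \<in> S" "\<And>k. Y k + N k \<in> M" "\<And>k. norm (N k) < 1 / Suc k"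
    by metis
  have "Y \<longlonglongrightarrow> x" "V \<longlonglongrightarrow> v" "N \<longlonglongrightarrow> 0"
    using LIMSEQ_norm_0[of "\<lambda>k. Y k - x"] LIMSEQ_norm_0[of "\<lambda>k. V k - v"] LIMSEQ_norm_0[of N] Y V N(3)
    by (simp_all add: LIM_zero_iff)
  moreover have "N k \<noteq> 0" for k using Y_out[of k] N(2)[of k] by auto
  ultimately obtain l where "l \<in> S" "norm l = 1" and half_space: "\<And>w. w \<in> subdiff \<Psi> x \<Longrightarrow> 0 \<le> (w - v) \<bullet> l"
    using subdiff_normal_approach_direction[where N = N and Y = Y and V = V and v = v,
        OF cont \<open>subspace S\<close> N(1) _ _ _ _ V_sub N(2)] by blast
  have "- l \<in> S" "norm (- l) \<le> 1" using \<open>l \<in> S\<close> \<open>subspace S\<close> \<open>norm l = 1\<close> by (simp_all add: subspace_neg)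
  then have "0 \<le> (v + e *\<^sub>R (- l) - v) \<bullet> l" using half_space push by blast
  moreover have "l \<bullet> l = 1" using \<open>norm l = 1\<close> by (simp flip: power2_norm_eq_inner)
  ultimately show False using \<open>e > 0\<close> by simp
qed

lemma partly_smooth_identification:
  fixes \<Psi> :: "'a::euclidean_space \<Rightarrow> ereal"
  assumes ps: "partly_smooth \<Psi> x M" and v: "v \<in> rel_interior (subdiff \<Psi> x)"
  shows "\<exists>\<eta>>0. \<forall>y w. norm (y - x) < \<eta> \<and> norm (w - v) < \<eta> \<and> w \<in> subdiff \<Psi> y \<longrightarrow> y \<in> M"
proof -
  from ps obtain U d \<Phi> a where "x \<in> M" and chart: "C2_manifold_chart M x U d \<Phi>"
    and aff: "affine hull (subdiff \<Psi> x) = (\<lambda>u. a + u) ` chart_normal_space x d \<Phi>"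
    and cont: "subdiff_continuous_rel \<Psi> x M"
    unfolding partly_smooth_def by blast
  obtain S where "subspace S" and S_normal: "S \<subseteq> chart_normal_space x d \<Phi>"
    and correct: "\<And>\<epsilon>. \<epsilon> > 0 \<Longrightarrow> \<exists>\<rho>>0. \<forall>y\<in>ball x \<rho>. \<exists>n\<in>S. y + n \<in> M \<and> norm n < \<epsilon>"
    using C2_manifold_chart_normal_correction[OF chart \<open>x \<in> M\<close>] by blast
  obtain e where "e > 0" and push: "\<And>l. l \<in> chart_normal_space x d \<Phi> \<Longrightarrow> norm l \<le> 1 \<Longrightarrow> v + e *\<^sub>R l \<in> subdiff \<Psi> x"
    using rel_interior_contains_affine_directions[OF v aff subspace_chart_normal_space] by blast
  show ?thesis
    by (rule identification_from_normal_correction[OF cont \<open>subspace S\<close> correct \<open>e > 0\<close>])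
      (use push S_normal in blast)+
qed

theorem theorem1:
  fixes f :: "'a::euclidean_space \<Rightarrow> real"
    and gradf :: "'a \<Rightarrow> 'a"
    and \<Psi> :: "'a \<Rightarrow> ereal"
    and \<gamma> \<beta> m M L :: real
    and x p :: "nat \<Rightarrow> 'a"
    and H :: "nat \<Rightarrow> 'a \<Rightarrow> 'a"
    and eps alpha :: "nat \<Rightarrow> real"
    and xs :: 'a
    and Mf :: "'a set"
  assumes f_grad: "\<And>y. (f has_derivative (\<lambda>h. gradf y \<bullet> h)) (at y)"
    and gradf_cont: "continuous_on UNIV gradf"
    and gradf_lip: "\<exists>Lg. \<forall>u v. norm (gradf u - gradf v) \<le> Lg * norm (u - v)"
    and Psi_proper: "proper_fun \<Psi>"
    and Psi_convex: "convex_ext \<Psi>"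
    and Psi_lsc: "lsc_ext \<Psi>"
    and sol_exists: "\<exists>z. \<forall>y. ereal (f z) + \<Psi> z \<le> ereal (f y) + \<Psi> y"
    and params: "0 < \<gamma>" "\<gamma> < 1" "0 < \<beta>" "\<beta> < 1"
    and x0_dom: "\<Psi> (x 0) < \<infinity>"
    and H_lin: "\<And>t. linear (H t)"
    and H_sym: "\<And>t u v. H t u \<bullet> v = u \<bullet> H t v"
    and H_psd: "\<And>t v. 0 \<le> v \<bullet> H t v"
    and mM: "0 < m" "m \<le> M"
    and H_bounds: "\<And>t v. m * (v \<bullet> v) \<le> v \<bullet> H t v \<and> v \<bullet> H t v \<le> M * (v \<bullet> v)"
    and eps_nonneg: "\<And>t. 0 \<le> eps t"
    and inexact: "\<And>t. \<exists>r. min_norm_elem r (subdiff (isqa_Q gradf \<Psi> (x t) (H t)) (p t))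
                          \<and> norm r \<le> eps t"
    and linesearch: "\<And>t. \<exists>k::nat. alpha t = \<beta> ^ k \<and>
         ereal (f (x t + \<beta> ^ k *\<^sub>R p t)) + \<Psi> (x t + \<beta> ^ k *\<^sub>R p t)
           \<le> ereal (f (x t)) + \<Psi> (x t) + ereal (\<gamma> * \<beta> ^ k) * isqa_Q gradf \<Psi> (x t) (H t) (p t) \<and>
         (\<forall>j<k. \<not> (ereal (f (x t + \<beta> ^ j *\<^sub>R p t)) + \<Psi> (x t + \<beta> ^ j *\<^sub>R p t)
           \<le> ereal (f (x t)) + \<Psi> (x t) + ereal (\<gamma> * \<beta> ^ j) * isqa_Q gradf \<Psi> (x t) (H t) (p t)))"
    and update: "\<And>t. x (Suc t) = x t + alpha t *\<^sub>R p t"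
    and relint: "0 \<in> rel_interior ((\<lambda>g. gradf xs + g) ` subdiff \<Psi> xs)"
    and psmooth: "partly_smooth \<Psi> xs Mf"
    and Lpos: "0 < L"
    and Lsmooth: "\<exists>\<rho>>0. \<forall>u\<in>ball xs \<rho>. \<forall>v\<in>ball xs \<rho>. norm (gradf u - gradf v) \<le> L * norm (u - v)"
  shows "\<exists>\<epsilon>>0. \<exists>\<delta>>0. \<forall>t. norm (x t - xs) \<le> \<delta> \<and> eps t \<le> \<epsilon> \<and> alpha t = 1 \<longrightarrow> x (Suc t) \<in> Mf"
proof -
  \<comment> \<open>the global Lipschitz bound on \<open>gradf\<close> replaces the local constant \<open>L\<close>\<close>
  obtain L0 where "\<forall>u v. norm (gradf u - gradf v) \<le> L0 * norm (u - v)" using gradf_lip by blast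
  then have lip: "norm (gradf u - gradf v) \<le> max 0 L0 * norm (u - v)" for u v
    by (meson max.cobounded2 mult_right_mono norm_ge_zero order_trans)
  have no_minf: "\<And>y. \<Psi> y \<noteq> -\<infinity>" using Psi_proper by (simp add: proper_fun_def)
  have Psi_fin: "\<bar>\<Psi> (x t)\<bar> < \<infinity>" for t
  proof (rule isqa_iterates_finite[where \<Psi> = \<Psi> and x = x, OF no_minf x0_dom])
    show "subdiff (isqa_Q gradf \<Psi> (x t) (H t)) (p t) \<noteq> {}" for t
      using inexact[of t] by (auto simp: min_norm_elem_def)
    show "ereal (f (x (Suc t))) + \<Psi> (x (Suc t))
        \<le> ereal (f (x t)) + \<Psi> (x t) + ereal (\<gamma> * alpha t) * isqa_Q gradf \<Psi> (x t) (H t) (p t)" for t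
      using linesearch[of t] update[of t] by auto
  qed
  have opt: "- gradf xs \<in> rel_interior (subdiff \<Psi> xs)"
    using relint rel_interior_translation[of "gradf xs" "subdiff \<Psi> xs"] by (auto simp: add_eq_0_iff)
  from partly_smooth_identification[OF psmooth this] obtain \<eta> where "\<eta> > 0"
    and identify: "\<forall>y w. norm (y - xs) < \<eta> \<and> norm (w + gradf xs) < \<eta> \<and> w \<in> subdiff \<Psi> y \<longrightarrow> y \<in> Mf"
    by auto
  define K where "K = (1 + max 0 L0 + M) * (1 + (1 + M) / m)"
  have "K > 0" using mM by (simp add: K_def add_pos_nonneg)
  show ?thesis
  proof (intro exI[of _ "\<eta> / (4 * K)"] conjI allI impI)
    fix t assume t: "norm (x t - xs) \<le> \<eta> / (4 * K) \<and> eps t \<le> \<eta> / (4 * K) \<and> alpha t = 1"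
    obtain r where r: "r \<in> subdiff (isqa_Q gradf \<Psi> (x t) (H t)) (p t)" and "norm r \<le> eps t"
      using inexact[of t] by (auto simp: min_norm_elem_def)
    have "x t + p t \<in> Mf"
    proof (rule isqa_unit_step_identified[where \<kappa> = "\<eta> / (4 * K)" and m = m and M = M and Hh = "H t",
          OF identify Psi_convex no_minf Psi_fin H_lin H_sym _ _ _ _ _ lip _ r])
      show "0 < m" "0 \<le> M" "0 \<le> max 0 L0" using mM by auto
      show "m * (v \<bullet> v) \<le> v \<bullet> H t v" "v \<bullet> H t v \<le> M * (v \<bullet> v)" for v using H_bounds by auto
      show "- gradf xs \<in> subdiff \<Psi> xs" using opt rel_interior_subset by blast
      show "norm r \<le> \<eta> / (4 * K)" "norm (x t - xs) \<le> \<eta> / (4 * K)" using t \<open>norm r \<le> eps t\<close> by auto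
      show "2 * ((1 + max 0 L0 + M) * (1 + (1 + M) / m)) * (\<eta> / (4 * K)) < \<eta>"
        using \<open>\<eta> > 0\<close> \<open>K > 0\<close> by (simp add: K_def[symmetric])
    qed
    then show "x (Suc t) \<in> Mf" using update[of t] t by simp
  qed (use \<open>\<eta> > 0\<close> \<open>K > 0\<close> in auto)
qed

end
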